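(* Let $X$ be a real Hilbert space, $A,B\colon X\rightrightarrows X$ maximally monotone, $D:=\operatorname{dom}A-\operatorname{dom}B$, $R:=\operatorname{ran}A+\operatorname{ran}B$, $v_D:=P_{\overline D}(0)$, $v_R:=P_{\overline R}(0)$. Then: (i) $v_D\in(-\operatorname{rec}\overline{\operatorname{dom}}A)^\ominus\cap(\operatorname{rec}\overline{\operatorname{dom}}B)^\ominus=(-(\operatorname{rec}\overline{\operatorname{dom}}A)^\ominus)\cap(\operatorname{rec}\overline{\operatorname{dom}}B)^\ominus$; (ii) $v_D\in(-\operatorname{rec}\overline{\operatorname{ran}}A)\cap\operatorname{rec}\overline{\operatorname{ran}}B$; (iii) $v_R\in(-\operatorname{rec}\overline{\operatorname{ran}}A)^\ominus\cap(-\operatorname{rec}\overline{\operatorname{ran}}B)^\ominus=-\big((\operatorname{rec}\overline{\operatorname{ran}}A)^\ominus\cap(\operatorname{rec}\overline{\operatorname{ran}}B)^\ominus\big)$; (iv) $v_R\in(-\operatorname{rec}\overline{\operatorname{dom}}A)\cap(-\operatorname{rec}\overline{\operatorname{dom}}B)=-(\operatorname{rec}\overline{\operatorname{dom}}A\cap\operatorname{rec}\overline{\operatorname{dom}}B)$; (v) $\langle v_D,v_R\rangle=0$; (vi) $v_D+v_R\in\overline D\cap\overline R$. Moreover, let $T:=\operatorname{Id}-J_A+J_BR_A$, $v:=P_{\overline{\operatorname{ran}}(\operatorname{Id}-T)}(0)$, and assume $\overline{\operatorname{ran}}(\operatorname{Id}-T)=\overline{D\cap R}=\overline D\cap\overline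 R$. Then (vii) $v=v_D+v_R$ and (viii) $\|v\|^2=\|v_D\|^2+\|v_R\|^2=\|(v_R,v_D)\|^2$.
   Context: $J_C:=(\operatorname{Id}+C)^{-1}$, $R_C:=2J_C-\operatorname{Id}$. $P_S$ is the projection onto a nonempty closed convex set $S$ (the sets $\overline D,\overline R$ are closed convex). $\overline{\operatorname{dom}}A$, $\overline{\operatorname{ran}}A$ are the closures of domain and range (closed convex sets). $\operatorname{rec}C:=\{d: C+d\subseteq C\}$ is the recession cone of a convex set $C$; for a set $S$, $S^\ominus:=\{u\in X:\langle u,s\rangle\le0\ \forall s\in S\}$ is the polar cone. $\|(v_R,v_D)\|$ is the norm in $X\times X$. *)

theory Defs
  imports "HOL-Analysis.Analysis"
begin

text \<open>Set-valued operators on a real Hilbert space are represented by their graphs.\<close>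

type_synonym 'a operator = "('a \<times> 'a) set"

definition mono_op :: "('a::real_inner) operator \<Rightarrow> bool" where
  "mono_op A \<longleftrightarrow> (\<forall>x u y w. (x, u) \<in> A \<longrightarrow> (y, w) \<in> A \<longrightarrow> inner (x - y) (u - w) \<ge> 0)"

definition max_mono :: "('a::real_inner) operator \<Rightarrow> bool" where
  "max_mono A \<longleftrightarrow> mono_op A \<and> (\<forall>B. mono_op B \<and> A \<subseteq> B \<longrightarrow> B = A)"

definition dom_op :: "'a operator \<Rightarrow> 'a set" where
  "dom_op A = {x. \<exists>u. (x, u) \<in> A}"

definition ran_op :: "'a operator \<Rightarrow> 'a set" where
  "ran_op A = {u. \<exists>x. (x, u) \<in> A}"

text \<open>Resolvent \<open>J_A = (Id + A)^{-1}\<close>: the (for maximally monotone A unique) point y with x - y in A y.\<close>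
definition resolvent :: "('a::real_vector) operator \<Rightarrow> 'a \<Rightarrow> 'a" where
  "resolvent A x = (THE y. (y, x - y) \<in> A)"

definition reflected_resolvent :: "('a::real_vector) operator \<Rightarrow> 'a \<Rightarrow> 'a" where
  "reflected_resolvent A x = 2 *\<^sub>R resolvent A x - x"

text \<open>Metric projection onto a set (for nonempty closed convex sets in a Hilbert space,
  the unique nearest point).\<close>
definition proj :: "('a::real_inner) set \<Rightarrow> 'a \<Rightarrow> 'a" where
  "proj S a = (THE x. x \<in> S \<and> (\<forall>y\<in>S. dist a x \<le> dist a y))"

definition rec_cone :: "('a::real_vector) set \<Rightarrow> 'a set" where
  "rec_cone C = {d. \<forall>c\<in>C. c + d \<in> C}"

definition polar_cone :: "('a::real_inner) set \<Rightarrow> 'a set" where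
  "polar_cone S = {u. \<forall>s\<in>S. inner u s \<le> 0}"

definition set_minus :: "('a::ab_group_add) set \<Rightarrow> 'a set \<Rightarrow> 'a set" where
  "set_minus S T = {s - t | s t. s \<in> S \<and> t \<in> T}"

definition set_plus :: "('a::ab_group_add) set \<Rightarrow> 'a set \<Rightarrow> 'a set" where
  "set_plus S T = {s + t | s t. s \<in> S \<and> t \<in> T}"

end

theory Submission
  imports Defs
begin

text \<open>
  The projections \<open>v\<^sub>D\<close> and \<open>v\<^sub>R\<close> are characterised by variational inequalities:
  \<open>\<parallel>v\<^sub>D\<parallel>\<^sup>2 \<le> \<langle>v\<^sub>D, x - y\<rangle>\<close> for \<open>x\<close>, \<open>y\<close> in the closed domains of \<open>A\<close>, \<open>B\<close>, and
  \<open>\<parallel>v\<^sub>R\<parallel>\<^sup>2 \<le> \<langle>v\<^sub>R, u + w\<rangle>\<close> for \<open>u\<close>, \<open>w\<close> in the closed ranges. So \<open>\<langle>-v\<^sub>D, \<cdot>\<rangle>\<close> is bounded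
  above on \<open>dom A\<close>, \<open>\<langle>v\<^sub>D, \<cdot>\<rangle>\<close> on \<open>dom B\<close>, and \<open>\<langle>-v\<^sub>R, \<cdot>\<rangle>\<close> on both ranges. A functional bounded
  above on a set lies in the polar of its recession cone, which gives (i) and (iii). For a
  maximally monotone operator, a functional bounded above on the domain is a recession direction of
  the closed range (move along resolvents with a small parameter); this gives (ii), and applied to
  the inverse operators (iv). Then (i) and (iv) force \<open>\<langle>v\<^sub>D, v\<^sub>R\<rangle> = 0\<close>, the recession
  directions translate \<open>closure D\<close> and \<open>closure R\<close> into themselves, and \<open>v\<^sub>D + v\<^sub>R\<close> satisfies the
  variational inequality of \<open>closure D \<inter> closure R\<close>.

  Everything rests on Minty's theorem that \<open>Id + c A\<close> is onto, which also makes the closed domain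
  convex. Finitely many monotone pairs \<open>(a\<^sub>i, b\<^sub>i)\<close> admit a point \<open>(z, -z)\<close> monotonically related to
  all of them: \<open>\<langle>a\<^sub>i - z, b\<^sub>i + z\<rangle> \<ge> 0\<close> says that \<open>z\<close> lies in a ball, and a minimiser of
  \<open>\<Sum>\<^sub>i max(0, \<parallel>z - c\<^sub>i\<parallel>\<^sup>2 - r\<^sub>i)\<^sup>2\<close> is such a point because its stationarity condition turns
  monotonicity into \<open>\<Sum>\<^sub>i max(0, \<dots>)\<^sup>2 \<le> 0\<close>. The finite intersection property of closed convex
  bounded sets in a Hilbert space then passes to the whole graph.
\<close>

section \<open>Closed convex sets in Hilbert spaces\<close>

lemma norm_diff_sq_le_if_min_norm:
  fixes x y :: "'a::real_inner"
  assumes "convex C" "x \<in> C" "y \<in> C" "0 \<le> r" "\<And>z. z \<in> C \<Longrightarrow> r \<le> norm z"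
  shows "(norm (x - y))\<^sup>2 \<le> 2 * (norm x)\<^sup>2 + 2 * (norm y)\<^sup>2 - 4 * r\<^sup>2"
proof -
  have "(1/2) *\<^sub>R x + (1/2) *\<^sub>R y \<in> C"
    using assms(1-3) by (simp add: convex_def)
  then have "r \<le> norm ((1/2) *\<^sub>R (x + y))"
    using assms(5) by (simp add: scaleR_add_right)
  then have "(2 * r)\<^sup>2 \<le> (norm (x + y))\<^sup>2"
    using assms(4) by (intro power_mono) auto
  moreover have "(norm (x - y))\<^sup>2 + (norm (x + y))\<^sup>2 = 2 * (norm x)\<^sup>2 + 2 * (norm y)\<^sup>2"
    by (simp add: power2_norm_eq_inner inner_diff inner_add inner_commute)
  ultimately show ?thesis
    by (simp add: power_mult_distrib)
qed

lemma Cauchy_if_norm_diff_sq_le: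
  fixes y :: "nat \<Rightarrow> 'a::real_normed_vector"
  assumes "g \<longlonglongrightarrow> 0" "\<And>m n. n \<le> m \<Longrightarrow> (norm (y m - y n))\<^sup>2 \<le> g m + g n"
  shows "Cauchy y"
proof (rule CauchyI)
  fix e :: real
  assume "0 < e"
  then obtain N where N: "\<And>n. N \<le> n \<Longrightarrow> \<bar>g n\<bar> < e\<^sup>2 / 2"
    using assms(1) unfolding LIMSEQ_def by (metis dist_real_def diff_zero half_gt_zero zero_less_power)
  have "norm (y m - y n) < e" if "N \<le> n" "n \<le> m" for m n
  proof -
    have "(norm (y m - y n))\<^sup>2 < e\<^sup>2"
      using assms(2)[OF that(2)] N[of m] N[of n] that by auto
    then show ?thesis
      using \<open>0 < e\<close> by (simp add: power_less_imp_less_base)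
  qed
  then show "\<exists>M. \<forall>m\<ge>M. \<forall>n\<ge>M. norm (y m - y n) < e"
    by (metis nle_le norm_minus_commute)
qed

lemma min_norm_point_exists:
  fixes C :: "'a::{real_inner,complete_space} set"
  assumes "closed C" "convex C" "C \<noteq> {}"
  shows "\<exists>x\<in>C. \<forall>y\<in>C. norm x \<le> norm y"
proof -
  define d where "d = Inf (norm ` C)"
  have d_le: "d \<le> norm z" if "z \<in> C" for z
    unfolding d_def using that by (auto intro!: cInf_lower bdd_belowI[of _ 0])
  have "0 \<le> d"
    unfolding d_def using assms(3) by (intro cInf_greatest) auto
  have "\<exists>z\<in>C. norm z < d + 1 / Suc n" for n
    using cInf_lessD[of "norm ` C" "d + 1 / Suc n"] assms(3) by (auto simp: d_def)
  then obtain y where y: "\<And>n. y n \<in> C" "\<And>n. norm (y n) < d + 1 / Suc n"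
    by metis
  have norm_y: "(\<lambda>n. norm (y n)) \<longlonglongrightarrow> d"
  proof (rule tendsto_sandwich[of "\<lambda>_. d" _ _ "\<lambda>n. d + 1 / Suc n"])
    show "(\<lambda>n. d + 1 / Suc n) \<longlonglongrightarrow> d"
      using tendsto_add[OF tendsto_const LIMSEQ_Suc[OF lim_inverse_n']]
      by (simp add: inverse_eq_divide)
    show "\<forall>\<^sub>F n in sequentially. norm (y n) \<le> d + 1 / Suc n"
      using y(2) less_imp_le by (intro always_eventually) blast
  qed (use y d_le in auto)
  have "Cauchy y"
  proof (rule Cauchy_if_norm_diff_sq_le)
    show "(\<lambda>n. 2 * (norm (y n))\<^sup>2 - 2 * d\<^sup>2) \<longlonglongrightarrow> 0"
      using tendsto_diff[OF tendsto_mult_left[OF tendsto_power[OF norm_y]] tendsto_const]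
      by (metis diff_self)
  qed (use norm_diff_sq_le_if_min_norm[OF assms(2) y(1) y(1) \<open>0 \<le> d\<close> d_le] in force)
  then obtain x where "y \<longlonglongrightarrow> x"
    by (blast dest: Cauchy_convergent convergentD)
  then have "x \<in> C" "norm x = d"
    using closed_sequentially[OF assms(1)] y(1) norm_y tendsto_norm LIMSEQ_unique by blast+
  then show ?thesis
    using d_le by auto
qed

lemma nearest_point_exists:
  fixes S :: "'a::{real_inner,complete_space} set"
  assumes "closed S" "convex S" "S \<noteq> {}"
  shows "\<exists>x\<in>S. \<forall>y\<in>S. dist a x \<le> dist a y"
proof -
  obtain z where "z \<in> (\<lambda>y. y - a) ` S" "\<forall>y\<in>(\<lambda>y. y - a) ` S. norm z \<le> norm y"
    using min_norm_point_exists[of "(\<lambda>y. y - a) ` S"] assms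
    by (auto simp: closed_translation_subtract)
  then show ?thesis
    by (auto simp: dist_norm norm_minus_commute)
qed

lemma proj_nearest:
  fixes S :: "'a::{real_inner,complete_space} set"
  assumes "closed S" "convex S" "S \<noteq> {}"
  shows "proj S a \<in> S \<and> (\<forall>y\<in>S. dist a (proj S a) \<le> dist a y)"
proof -
  obtain x where x: "x \<in> S" "\<forall>y\<in>S. dist a x \<le> dist a y"
    using nearest_point_exists[OF assms] by blast
  have "\<exists>!x. x \<in> S \<and> (\<forall>y\<in>S. dist a x \<le> dist a y)"
  proof (rule ex1I[of _ x])
    show "\<And>z. z \<in> S \<and> (\<forall>y\<in>S. dist a z \<le> dist a y) \<Longrightarrow> z = x"
      using any_closest_point_unique[OF assms(2,1) _ x(1) _ x(2)] by blast
  qed (use x in blast)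
  then show ?thesis
    unfolding proj_def by (rule theI')
qed

lemma proj_in:
  fixes S :: "'a::{real_inner,complete_space} set"
  assumes "closed S" "convex S" "S \<noteq> {}"
  shows "proj S a \<in> S"
  using proj_nearest[OF assms] by blast

lemma norm_proj0_le:
  fixes S :: "'a::{real_inner,complete_space} set"
  assumes "closed S" "convex S" "y \<in> S"
  shows "norm (proj S 0) \<le> norm y"
  using proj_nearest[OF assms(1,2), of 0] assms(3) by auto

lemma inner_proj_le_0:
  fixes S :: "'a::{real_inner,complete_space} set"
  assumes "closed S" "convex S" "y \<in> S"
  shows "inner (a - proj S a) (y - proj S a) \<le> 0"
  using proj_nearest[OF assms(1,2), of a] any_closest_point_dot[OF assms(2,1)] assms(3) by blast

lemma norm_proj0_sq_le_inner:
  fixes S :: "'a::{real_inner,complete_space} set"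
  assumes "closed S" "convex S" "y \<in> S"
  shows "(norm (proj S 0))\<^sup>2 \<le> inner (proj S 0) y"
  using inner_proj_le_0[OF assms, of 0] by (simp add: inner_diff_right power2_norm_eq_inner)

lemma norm_proj_diff_le:
  fixes S :: "'a::{real_inner,complete_space} set"
  assumes "closed S" "convex S" "c \<in> S"
  shows "norm (proj S z - c) \<le> norm (z - c)"
proof -
  let ?p = "proj S z"
  have "(norm (z - c))\<^sup>2 = (norm (z - ?p))\<^sup>2 + (norm (?p - c))\<^sup>2 - 2 * inner (z - ?p) (c - ?p)"
    by (simp add: power2_norm_eq_inner inner_diff inner_commute)
  then have "(norm (?p - c))\<^sup>2 \<le> (norm (z - c))\<^sup>2"
    using inner_proj_le_0[OF assms, of z] zero_le_power2[of "norm (z - ?p)"] by linarith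
  then show ?thesis
    by (simp add: power2_le_iff_abs_le)
qed

lemma proj_eqI:
  fixes S :: "'a::{real_inner,complete_space} set"
  assumes "closed S" "convex S" "p \<in> S" "\<And>y. y \<in> S \<Longrightarrow> inner (a - p) (y - p) \<le> 0"
  shows "proj S a = p"
proof -
  have "dist a p \<le> dist a y" if "y \<in> S" for y
  proof -
    have "(dist a y)\<^sup>2 = (dist a p)\<^sup>2 + (norm (p - y))\<^sup>2 - 2 * inner (a - p) (y - p)"
      by (simp add: dist_norm power2_norm_eq_inner inner_diff inner_commute)
    then have "(dist a p)\<^sup>2 \<le> (dist a y)\<^sup>2"
      using assms(4)[OF that] zero_le_power2[of "norm (p - y)"] by linarith
    then show ?thesis
      by (simp add: power2_le_iff_abs_le)
  qed
  moreover have "proj S a \<in> S" "\<forall>y\<in>S. dist a (proj S a) \<le> dist a y"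
    using proj_nearest[OF assms(1,2)] assms(3) by blast+
  ultimately show ?thesis
    using any_closest_point_unique[OF assms(2,1) _ assms(3)] by blast
qed

lemma norm_diff_proj0_sq_le:
  fixes S :: "'a::{real_inner,complete_space} set"
  assumes "closed S" "convex S" "x \<in> S" "norm x \<le> d"
  shows "(norm (x - proj S 0))\<^sup>2 \<le> d\<^sup>2 - (norm (proj S 0))\<^sup>2"
proof -
  let ?p = "proj S 0"
  have "(norm x)\<^sup>2 = (norm ?p)\<^sup>2 + 2 * inner ?p (x - ?p) + (norm (x - ?p))\<^sup>2"
    by (simp add: power2_norm_eq_inner inner_diff inner_commute)
  moreover have "0 \<le> inner ?p (x - ?p)"
    using inner_proj_le_0[OF assms(1-3), of 0] by simp
  moreover have "(norm x)\<^sup>2 \<le> d\<^sup>2"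
    using power_mono[OF assms(4) norm_ge_zero] .
  ultimately show ?thesis
    by linarith
qed

lemma closed_mem_if_norm_diff_sq_le:
  fixes p :: "nat \<Rightarrow> 'a::real_normed_vector"
  assumes "closed K" "p \<longlonglongrightarrow> x" "g \<longlonglongrightarrow> 0" "\<And>n. q n \<in> K" "\<And>n. (norm (q n - p n))\<^sup>2 \<le> g n"
  shows "x \<in> K"
proof (rule closed_sequentially[OF assms(1) assms(4)])
  have "(\<lambda>n. (norm (q n - p n))\<^sup>2) \<longlonglongrightarrow> 0"
    using assms(5) by (intro tendsto_sandwich[OF _ _ tendsto_const assms(3)] always_eventually allI) auto
  from tendsto_real_sqrt[OF this] have "(\<lambda>n. norm (q n - p n)) \<longlonglongrightarrow> 0"
    by simp
  from tendsto_add[OF tendsto_norm_zero_cancel[OF this] assms(2)] show "q \<longlonglongrightarrow> x"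
    by simp
qed

lemma incseq_tendsto_SUP:
  fixes m :: "'b set \<Rightarrow> real"
  assumes "bdd_above (m ` \<S>)"
    and mono: "\<And>G G'. G \<in> \<S> \<Longrightarrow> G' \<in> \<S> \<Longrightarrow> G \<subseteq> G' \<Longrightarrow> m G \<le> m G'"
    and "{} \<in> \<S>" and union: "\<And>G G'. G \<in> \<S> \<Longrightarrow> G' \<in> \<S> \<Longrightarrow> G \<union> G' \<in> \<S>"
  obtains H where "\<And>n. H n \<in> \<S>" "incseq H" "(\<lambda>n. m (H n)) \<longlonglongrightarrow> (SUP G\<in>\<S>. m G)"
proof -
  define d where "d = (SUP G\<in>\<S>. m G)"
  have "\<exists>G\<in>\<S>. d - 1 / Suc n < m G" for n
    using less_cSUP_iff[of \<S> m "d - 1 / Suc n"] assms(1,3) by (auto simp: d_def)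
  then obtain F where F: "\<And>n. F n \<in> \<S>" "\<And>n. d - 1 / Suc n < m (F n)"
    by metis
  define H where "H n = \<Union>(F ` {..n})" for n
  have H: "H n \<in> \<S>" for n
    by (induction n) (auto simp: H_def atMost_Suc F(1) intro!: union)
  have "incseq H"
    unfolding H_def by (intro monoI UN_mono) auto
  have "(\<lambda>n. m (H n)) \<longlonglongrightarrow> d"
  proof (rule tendsto_sandwich[of "\<lambda>n. d - 1 / Suc n" _ _ "\<lambda>_. d"])
    have "d - 1 / Suc n \<le> m (H n)" for n
    proof -
      have "F n \<subseteq> H n"
        by (auto simp: H_def)
      then show ?thesis
        using F(2)[of n] mono[OF F(1) H \<open>F n \<subseteq> H n\<close>] by linarith
    qed
    then show "\<forall>\<^sub>F n in sequentially. d - 1 / Suc n \<le> m (H n)"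
      by simp
    show "\<forall>\<^sub>F n in sequentially. m (H n) \<le> d"
      using cSUP_upper[OF H assms(1)] by (simp add: d_def)
    show "(\<lambda>n. d - 1 / Suc n) \<longlonglongrightarrow> d"
      using tendsto_diff[OF tendsto_const LIMSEQ_Suc[OF lim_inverse_n']]
      by (simp add: inverse_eq_divide)
  qed simp
  then show ?thesis
    unfolding d_def by (rule that[OF H \<open>incseq H\<close>])
qed

lemma closed_convex_fip:
  fixes \<F> :: "'a::{real_inner,complete_space} set set"
  assumes closed_convex: "\<And>K. K \<in> \<F> \<Longrightarrow> closed K \<and> convex K"
    and K0: "closed K0" "convex K0" "bounded K0"
    and fip: "\<And>\<G>. finite \<G> \<Longrightarrow> \<G> \<subseteq> \<F> \<Longrightarrow> K0 \<inter> \<Inter>\<G> \<noteq> {}"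
  shows "K0 \<inter> \<Inter>\<F> \<noteq> {}"
proof -
  define C where "C \<G> = K0 \<inter> \<Inter>\<G>" for \<G>
  define fin where "fin = {\<G>. finite \<G> \<and> \<G> \<subseteq> \<F>}"
  define p where "p \<G> = proj (C \<G>) 0" for \<G>
  have C: "closed (C \<G>)" "convex (C \<G>)" "C \<G> \<noteq> {}" if "\<G> \<in> fin" for \<G>
    using that closed_convex K0(1,2) fip[of \<G>]
    by (auto simp: C_def fin_def intro!: closed_Int closed_Inter convex_Int convex_Inter)
  have p_in: "p \<G> \<in> C \<G>" if "\<G> \<in> fin" for \<G>
    unfolding p_def using proj_in[OF C[OF that]] .
  obtain b where "\<And>x. x \<in> K0 \<Longrightarrow> norm x \<le> b"
    using K0(3) by (meson bounded_iff)
  then have "bdd_above ((\<lambda>\<G>. norm (p \<G>)) ` fin)"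
    using p_in by (auto simp: C_def intro!: bdd_aboveI[of _ b])
  moreover have "norm (p \<G>) \<le> norm (p \<G>')" if "\<G> \<in> fin" "\<G>' \<in> fin" "\<G> \<subseteq> \<G>'" for \<G> \<G>'
    using p_in[OF that(2)] that(3) unfolding p_def by (intro norm_proj0_le[OF C(1,2)[OF that(1)]]) (auto simp: C_def)
  ultimately obtain H where H: "\<And>n. H n \<in> fin" "incseq H"
    and norm_p: "(\<lambda>n. norm (p (H n))) \<longlonglongrightarrow> (SUP \<G>\<in>fin. norm (p \<G>))" (is "_ \<longlonglongrightarrow> ?d")
    by (rule incseq_tendsto_SUP) (auto simp: fin_def)
  define g where "g n = ?d\<^sup>2 - (norm (p (H n)))\<^sup>2" for n
  have g: "g \<longlonglongrightarrow> 0"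
    unfolding g_def using tendsto_diff[OF tendsto_const tendsto_power[OF norm_p], of "?d\<^sup>2" 2] by simp
  have close: "(norm (p \<G> - p (H n)))\<^sup>2 \<le> g n" if "\<G> \<in> fin" "H n \<subseteq> \<G>" for \<G> n
    using p_in[OF that(1)] that(2) cSUP_upper[OF that(1) \<open>bdd_above _\<close>] unfolding g_def p_def
    by (intro norm_diff_proj0_sq_le[OF C(1,2)[OF H(1)]]) (auto simp: C_def)
  have "Cauchy (\<lambda>n. p (H n))"
  proof (rule Cauchy_if_norm_diff_sq_le[OF g])
    show "(norm (p (H m) - p (H n)))\<^sup>2 \<le> g m + g n" if "n \<le> m" for m n
      using close[OF H(1) monoD[OF H(2) that]] close[OF H(1) order_refl, of m] by simp
  qed
  then obtain x where x: "(\<lambda>n. p (H n)) \<longlonglongrightarrow> x"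
    by (blast dest: Cauchy_convergent convergentD)
  have "x \<in> K" if "K \<in> \<F>" for K
  proof (rule closed_mem_if_norm_diff_sq_le[OF _ x g])
    have fin_K: "insert K (H n) \<in> fin" for n
      using H(1) that by (auto simp: fin_def)
    show "p (insert K (H n)) \<in> K" "(norm (p (insert K (H n)) - p (H n)))\<^sup>2 \<le> g n" for n
      using p_in[OF fin_K] close[OF fin_K subset_insertI] by (auto simp: C_def)
  qed (use closed_convex[OF that] in blast)
  moreover have "x \<in> K0"
    using p_in[OF H(1)] by (intro closed_sequentially[OF K0(1) _ x]) (simp add: C_def)
  ultimately show ?thesis
    by blast
qed

section \<open>Minty's theorem\<close>

lemma max0_sq_remainder:
  fixes s t :: real
  defines "R \<equiv> (max 0 s)\<^sup>2 - (max 0 t)\<^sup>2 - 2 * max 0 t * (s - t)"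
  shows "0 \<le> R" "R \<le> (s - t)\<^sup>2"
proof -
  have "0 \<le> R \<and> R \<le> (s - t)\<^sup>2"
  proof (cases "0 \<le> s"; cases "0 \<le> t")
    assume "0 \<le> s" "0 \<le> t"
    then have "R = (s - t)\<^sup>2"
      by (simp add: R_def power2_eq_square algebra_simps)
    then show ?thesis
      by simp
  next
    assume "0 \<le> s" "\<not> 0 \<le> t"
    then have "R = s\<^sup>2" "s\<^sup>2 \<le> (s - t)\<^sup>2"
      by (auto simp: R_def intro: power_mono)
    then show ?thesis
      by simp
  next
    assume "\<not> 0 \<le> s" "0 \<le> t"
    then have "R = t\<^sup>2 - 2 * (s * t)" "s * t \<le> 0"
      by (auto simp: R_def power2_eq_square algebra_simps mult_nonpos_nonneg)
    then show ?thesis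
      unfolding power2_diff using zero_le_power2[of s] zero_le_power2[of t] by linarith
  next
    assume "\<not> 0 \<le> s" "\<not> 0 \<le> t"
    then show ?thesis
      by (simp add: R_def)
  qed
  then show "0 \<le> R" "R \<le> (s - t)\<^sup>2"
    by auto
qed

lemma has_real_derivative_max0_sq:
  "((\<lambda>s. (max 0 s)\<^sup>2) has_real_derivative 2 * max 0 t) (at t)"
proof -
  let ?q = "\<lambda>s. ((max 0 s)\<^sup>2 - (max 0 t)\<^sup>2) / (s - t) - 2 * max 0 t"
  have "\<bar>?q s\<bar> \<le> \<bar>s - t\<bar>" if "s \<noteq> t" for s
  proof -
    have "?q s = ((max 0 s)\<^sup>2 - (max 0 t)\<^sup>2 - 2 * max 0 t * (s - t)) / (s - t)"
      using that by (simp add: diff_divide_distrib)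
    also have "\<bar>\<dots>\<bar> \<le> (s - t)\<^sup>2 / \<bar>s - t\<bar>"
      unfolding abs_divide using max0_sq_remainder[of s t] by (intro divide_right_mono) auto
    also have "\<dots> = \<bar>s - t\<bar>"
      by (metis real_div_sqrt real_sqrt_abs zero_le_power2)
    finally show ?thesis .
  qed
  then have "\<forall>\<^sub>F s in at t. norm (?q s) \<le> \<bar>s - t\<bar>"
    by (auto simp: eventually_at_filter)
  moreover have "((\<lambda>s. \<bar>s - t\<bar>) \<longlongrightarrow> 0) (at t)"
    by (intro tendsto_rabs_zero LIM_zero tendsto_ident_at)
  ultimately have "(?q \<longlongrightarrow> 0) (at t)"
    by (rule Lim_null_comparison)
  then show ?thesis
    unfolding has_field_derivative_iff LIM_zero_iff .
qed

lemma has_derivative_sum_max0_sq_dist: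
  fixes c :: "'i \<Rightarrow> 'a::real_inner"
  shows "((\<lambda>z. \<Sum>i\<in>I. (max 0 ((norm (z - c i))\<^sup>2 - r i))\<^sup>2) has_derivative
          (\<lambda>v. \<Sum>i\<in>I. 2 * max 0 ((norm (z - c i))\<^sup>2 - r i) * (2 * inner (z - c i) v))) (at z)"
proof (rule has_derivative_sum)
  fix i
  have "((\<lambda>z. (norm (z - c i))\<^sup>2 - r i) has_derivative (\<lambda>v. 2 * inner (z - c i) v)) (at z)"
    unfolding power2_norm_eq_inner by (auto intro!: derivative_eq_intros simp: inner_commute)
  from has_derivative_compose[OF this has_field_derivative_imp_has_derivative[OF has_real_derivative_max0_sq]]
  show "((\<lambda>z. (max 0 ((norm (z - c i))\<^sup>2 - r i))\<^sup>2) has_derivative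
          (\<lambda>v. 2 * max 0 ((norm (z - c i))\<^sup>2 - r i) * (2 * inner (z - c i) v))) (at z)" .
qed

lemma sum_max0_sq_dist_stationary:
  fixes c :: "'i \<Rightarrow> 'a::real_inner"
  assumes "\<And>z. (\<Sum>i\<in>I. (max 0 ((norm (z0 - c i))\<^sup>2 - r i))\<^sup>2) \<le> (\<Sum>i\<in>I. (max 0 ((norm (z - c i))\<^sup>2 - r i))\<^sup>2)"
  shows "(\<Sum>i\<in>I. max 0 ((norm (z0 - c i))\<^sup>2 - r i) *\<^sub>R (z0 - c i)) = 0"
proof -
  define w where "w = (\<Sum>i\<in>I. max 0 ((norm (z0 - c i))\<^sup>2 - r i) *\<^sub>R (z0 - c i))"
  have "(\<lambda>v. \<Sum>i\<in>I. 2 * max 0 ((norm (z0 - c i))\<^sup>2 - r i) * (2 * inner (z0 - c i) v)) = (\<lambda>v. 0)"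
    using assms by (intro differential_zero_maxmin[OF UNIV_I open_UNIV has_derivative_sum_max0_sq_dist]) auto
  then have "(\<Sum>i\<in>I. 2 * max 0 ((norm (z0 - c i))\<^sup>2 - r i) * (2 * inner (z0 - c i) w)) = 0"
    by meson
  then have "4 * inner w w = 0"
    by (simp add: w_def inner_sum_left sum_distrib_left mult.assoc mult.left_commute)
  then show ?thesis
    by (simp add: w_def)
qed

lemma sum_max0_sq_dist_attains_min:
  fixes c :: "'i \<Rightarrow> 'a::{real_inner,complete_space}"
  assumes "finite I"
  shows "\<exists>z0. \<forall>z. (\<Sum>i\<in>I. (max 0 ((norm (z0 - c i))\<^sup>2 - r i))\<^sup>2) \<le> (\<Sum>i\<in>I. (max 0 ((norm (z - c i))\<^sup>2 - r i))\<^sup>2)"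
proof (cases "I = {}")
  case False
  define \<psi> where "\<psi> z = (\<Sum>i\<in>I. (max 0 ((norm (z - c i))\<^sup>2 - r i))\<^sup>2)" for z
  define K where "K = convex hull (c ` I)"
  have K: "compact K" "closed K" "convex K" "K \<noteq> {}"
    using finite_imp_compact_convex_hull[of "c ` I"] assms False
    by (auto simp: K_def compact_imp_closed)
  have "continuous_on K \<psi>"
    unfolding \<psi>_def by (intro continuous_intros)
  then obtain z0 where z0: "\<And>y. y \<in> K \<Longrightarrow> \<psi> z0 \<le> \<psi> y"
    using continuous_attains_inf[OF K(1,4)] by blast
  have "\<psi> (proj K z) \<le> \<psi> z" for z
  proof -
    have "norm (proj K z - c i) \<le> norm (z - c i)" if "i \<in> I" for i
      using that by (intro norm_proj_diff_le[OF K(2,3)]) (simp add: K_def hull_inc)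
    then show ?thesis
      unfolding \<psi>_def by (intro sum_mono power_mono max.mono diff_right_mono) auto
  qed
  then show ?thesis
    using z0 proj_in[OF K(2,3,4)] unfolding \<psi>_def by (meson order.trans)
qed simp

lemma monotone_weighted_inner_le:
  fixes a b :: "'i \<Rightarrow> 'a::real_inner"
  assumes "finite I" "\<And>i. i \<in> I \<Longrightarrow> 0 \<le> \<mu> i"
    and mono: "\<And>i j. i \<in> I \<Longrightarrow> j \<in> I \<Longrightarrow> 0 \<le> inner (a i - a j) (b i - b j)"
  shows "inner (\<Sum>i\<in>I. \<mu> i *\<^sub>R a i) (\<Sum>i\<in>I. \<mu> i *\<^sub>R b i) \<le> (\<Sum>i\<in>I. \<mu> i) * (\<Sum>i\<in>I. \<mu> i * inner (a i) (b i))"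
proof -
  have "0 \<le> (\<Sum>i\<in>I. \<Sum>j\<in>I. \<mu> i * \<mu> j * inner (a i - a j) (b i - b j))"
    using assms by (intro sum_nonneg mult_nonneg_nonneg) auto
  also have "\<dots> = (\<Sum>i\<in>I. \<Sum>j\<in>I. \<mu> j * (\<mu> i * inner (a i) (b i)) + \<mu> i * (\<mu> j * inner (a j) (b j))
                    - inner (\<mu> i *\<^sub>R a i) (\<mu> j *\<^sub>R b j) - inner (\<mu> j *\<^sub>R a j) (\<mu> i *\<^sub>R b i))"
    by (intro sum.cong refl) (simp add: inner_diff_left inner_diff_right algebra_simps)
  also have "\<dots> = 2 * ((\<Sum>i\<in>I. \<mu> i) * (\<Sum>i\<in>I. \<mu> i * inner (a i) (b i))
                     - inner (\<Sum>i\<in>I. \<mu> i *\<^sub>R a i) (\<Sum>i\<in>I. \<mu> i *\<^sub>R b i))"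
    by (simp only: sum.distrib sum_subtractf flip: sum_distrib_left sum_distrib_right
        inner_sum_left inner_sum_right) (simp add: sum_distrib_left algebra_simps)
  finally show ?thesis
    by simp
qed

lemma sum_weighted_inner_diff_add:
  fixes a b :: "'i \<Rightarrow> 'a::real_inner"
  shows "(\<Sum>i\<in>I. \<mu> i * inner (a i - z) (b i + z))
    = (\<Sum>i\<in>I. \<mu> i * inner (a i) (b i)) + inner ((\<Sum>i\<in>I. \<mu> i *\<^sub>R a i) - (\<Sum>i\<in>I. \<mu> i *\<^sub>R b i)) z
      - (\<Sum>i\<in>I. \<mu> i) * inner z z"
proof -
  have "(\<Sum>i\<in>I. \<mu> i * inner (a i - z) (b i + z))
      = (\<Sum>i\<in>I. \<mu> i * inner (a i) (b i) + inner (\<mu> i *\<^sub>R a i - \<mu> i *\<^sub>R b i) z - \<mu> i * inner z z)"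
    by (intro sum.cong refl) (simp add: inner_diff_left inner_add_right inner_commute algebra_simps)
  then show ?thesis
    by (simp add: sum.distrib sum_subtractf sum_distrib_right flip: inner_sum_left)
qed

lemma monotone_weighted_sum_inner_nonneg:
  fixes a b :: "'i \<Rightarrow> 'a::real_inner"
  assumes "finite I" and nonneg: "\<And>i. i \<in> I \<Longrightarrow> 0 \<le> \<mu> i"
    and mono: "\<And>i j. i \<in> I \<Longrightarrow> j \<in> I \<Longrightarrow> 0 \<le> inner (a i - a j) (b i - b j)"
    and z: "(\<Sum>i\<in>I. \<mu> i) *\<^sub>R z = (1/2) *\<^sub>R ((\<Sum>i\<in>I. \<mu> i *\<^sub>R a i) - (\<Sum>i\<in>I. \<mu> i *\<^sub>R b i))"
  shows "0 \<le> (\<Sum>i\<in>I. \<mu> i * inner (a i - z) (b i + z))"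
proof -
  define M where "M = (\<Sum>i\<in>I. \<mu> i)"
  define Sa where "Sa = (\<Sum>i\<in>I. \<mu> i *\<^sub>R a i)"
  define Sb where "Sb = (\<Sum>i\<in>I. \<mu> i *\<^sub>R b i)"
  define P where "P = (\<Sum>i\<in>I. \<mu> i * inner (a i) (b i))"
  have "0 \<le> M"
    unfolding M_def using nonneg by (rule sum_nonneg)
  have h: "(1/2) *\<^sub>R (Sa - Sb) = M *\<^sub>R z"
    using z by (simp add: M_def Sa_def Sb_def)
  \<comment> \<open>with \<open>h = (Sa - Sb)/2\<close>, the sum times \<open>M\<close> is \<open>M P + \<parallel>h\<parallel>\<^sup>2 \<ge> \<langle>Sa, Sb\<rangle> + \<parallel>h\<parallel>\<^sup>2 = \<parallel>(Sa + Sb)/2\<parallel>\<^sup>2\<close>\<close>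
  have "0 \<le> (norm ((1/2) *\<^sub>R (Sa + Sb)))\<^sup>2"
    by simp
  also have "\<dots> = inner Sa Sb + (norm ((1/2) *\<^sub>R (Sa - Sb)))\<^sup>2"
    by (simp add: power2_norm_eq_inner inner_add inner_diff inner_commute algebra_simps)
  also have "\<dots> \<le> M * P + (norm ((1/2) *\<^sub>R (Sa - Sb)))\<^sup>2"
    using monotone_weighted_inner_le[OF \<open>finite I\<close> nonneg mono] by (simp add: M_def P_def Sa_def Sb_def)
  also have "\<dots> = M * (P + inner (Sa - Sb) z - M * inner z z)"
  proof -
    have "Sa - Sb = 2 *\<^sub>R (M *\<^sub>R z)"
      by (simp flip: h)
    then have "inner (Sa - Sb) z = 2 * (M * inner z z)"
      by simp
    moreover have "(norm ((1/2) *\<^sub>R (Sa - Sb)))\<^sup>2 = M * (M * inner z z)"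
      unfolding h power2_norm_eq_inner by simp
    ultimately show ?thesis
      by (simp add: right_diff_distrib distrib_left)
  qed
  also have "\<dots> = M * (\<Sum>i\<in>I. \<mu> i * inner (a i - z) (b i + z))"
    by (simp add: sum_weighted_inner_diff_add M_def P_def Sa_def Sb_def)
  finally have "0 \<le> M * (\<Sum>i\<in>I. \<mu> i * inner (a i - z) (b i + z))" .
  moreover have "M = 0 \<Longrightarrow> \<forall>i\<in>I. \<mu> i = 0"
    using sum_nonneg_eq_0_iff[OF \<open>finite I\<close> nonneg] by (simp add: M_def)
  ultimately show ?thesis
    using \<open>0 \<le> M\<close> by (cases "M = 0") (simp_all add: zero_le_mult_iff)
qed

lemma inner_diff_add_eq:
  fixes p q u :: "'a::real_inner"
  shows "inner (p - u) (q + u) = (norm (p + q))\<^sup>2 / 4 - (norm (u - (1/2) *\<^sub>R (p - q)))\<^sup>2"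
  by (simp add: power2_norm_eq_inner inner_diff inner_add inner_commute algebra_simps diff_divide_distrib
      add_divide_distrib)

lemma finite_monotone_antidiagonal_point:
  fixes a b :: "'i \<Rightarrow> 'a::{real_inner,complete_space}"
  assumes "finite I" and mono: "\<And>i j. i \<in> I \<Longrightarrow> j \<in> I \<Longrightarrow> 0 \<le> inner (a i - a j) (b i - b j)"
  shows "\<exists>z. \<forall>i\<in>I. 0 \<le> inner (a i - z) (b i + z)"
proof -
  define c where "c i = (1/2) *\<^sub>R (a i - b i)" for i
  define r where "r i = (norm (a i + b i))\<^sup>2 / 4" for i
  have ball: "(norm (z - c i))\<^sup>2 - r i = - inner (a i - z) (b i + z)" for i z
    by (simp add: inner_diff_add_eq c_def r_def)
  obtain z0 where "\<And>z. (\<Sum>i\<in>I. (max 0 ((norm (z0 - c i))\<^sup>2 - r i))\<^sup>2) \<le> (\<Sum>i\<in>I. (max 0 ((norm (z - c i))\<^sup>2 - r i))\<^sup>2)"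
    using sum_max0_sq_dist_attains_min[OF \<open>finite I\<close>] by blast
  from sum_max0_sq_dist_stationary[OF this]
  have stationary: "(\<Sum>i\<in>I. max 0 (- inner (a i - z0) (b i + z0)) *\<^sub>R (z0 - c i)) = 0"
    by (simp only: ball)
  define \<mu> where "\<mu> i = max 0 (- inner (a i - z0) (b i + z0))" for i
  have "(\<Sum>i\<in>I. \<mu> i) *\<^sub>R z0 = (1/2) *\<^sub>R ((\<Sum>i\<in>I. \<mu> i *\<^sub>R a i) - (\<Sum>i\<in>I. \<mu> i *\<^sub>R b i))"
    using stationary
    by (simp add: \<mu>_def c_def scaleR_diff_right scaleR_sum_left sum_subtractf scaleR_sum_right)
  then have "0 \<le> (\<Sum>i\<in>I. \<mu> i * inner (a i - z0) (b i + z0))"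
    by (intro monotone_weighted_sum_inner_nonneg[OF \<open>finite I\<close> _ mono]) (auto simp: \<mu>_def)
  also have "\<dots> = - (\<Sum>i\<in>I. (\<mu> i)\<^sup>2)"
    unfolding sum_negf[symmetric] by (intro sum.cong refl) (simp add: \<mu>_def max_def power2_eq_square)
  finally have "\<forall>i\<in>I. (\<mu> i)\<^sup>2 = 0"
    using sum_nonneg_eq_0_iff[OF \<open>finite I\<close>, of "\<lambda>i. (\<mu> i)\<^sup>2"]
    by (simp add: sum_nonneg order_antisym)
  then have "\<forall>i\<in>I. 0 \<le> inner (a i - z0) (b i + z0)"
    by (auto simp: \<mu>_def max_def split: if_splits)
  then show ?thesis ..
qed

lemma monotone_antidiagonal_point:
  fixes a b :: "'i \<Rightarrow> 'a::{real_inner,complete_space}"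
  assumes mono: "\<And>i j. i \<in> I \<Longrightarrow> j \<in> I \<Longrightarrow> 0 \<le> inner (a i - a j) (b i - b j)"
  shows "\<exists>z. \<forall>i\<in>I. 0 \<le> inner (a i - z) (b i + z)"
proof (cases "I = {}")
  case False
  then obtain i0 where "i0 \<in> I"
    by blast
  define Z where "Z i = {z. 0 \<le> inner (a i - z) (b i + z)}" for i
  have Z_eq: "Z i = cball ((1/2) *\<^sub>R (a i - b i)) (norm (a i + b i) / 2)" for i
  proof -
    have "0 \<le> inner (a i - z) (b i + z) \<longleftrightarrow> dist ((1/2) *\<^sub>R (a i - b i)) z \<le> norm (a i + b i) / 2" for z
    proof -
      let ?n = "dist ((1/2) *\<^sub>R (a i - b i)) z" and ?r = "norm (a i + b i) / 2"
      have "inner (a i - z) (b i + z) = ?r\<^sup>2 - ?n\<^sup>2"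
        unfolding inner_diff_add_eq by (simp add: dist_norm norm_minus_commute power_divide)
      moreover have "?n\<^sup>2 \<le> ?r\<^sup>2 \<longleftrightarrow> ?n \<le> ?r"
        using abs_le_square_iff[of ?n ?r] by simp
      ultimately show ?thesis
        by simp
    qed
    then show ?thesis
      by (auto simp: Z_def cball_def)
  qed
  have "Z i0 \<inter> \<Inter>(Z ` I) \<noteq> {}"
  proof (rule closed_convex_fip)
    fix \<G>
    assume "finite \<G>" "\<G> \<subseteq> Z ` I"
    then obtain J where J: "J \<subseteq> I" "finite J" "\<G> = Z ` J"
      using finite_subset_image by blast
    have "\<exists>z. \<forall>i\<in>insert i0 J. 0 \<le> inner (a i - z) (b i + z)"
      using J(1,2) \<open>i0 \<in> I\<close> by (intro finite_monotone_antidiagonal_point mono) auto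
    then show "Z i0 \<inter> \<Inter>\<G> \<noteq> {}"
      using J(3) by (auto simp: Z_def)
  qed (auto simp: Z_eq)
  then show ?thesis
    by (auto simp: Z_def)
qed simp

lemma max_mono_nonempty:
  assumes "max_mono (A :: ('a::real_inner) operator)"
  shows "A \<noteq> {}"
proof
  assume "A = {}"
  moreover have "mono_op {(0::'a, 0)}"
    by (simp add: mono_op_def)
  ultimately show False
    using assms unfolding max_mono_def by blast
qed

lemma inner_diff_swap: "inner (x - y) (u - v) = inner (y - x) (v - u)"
  by (simp add: inner_diff_left inner_diff_right)

lemma max_mono_memI:
  assumes "max_mono (A :: ('a::real_inner) operator)"
    and "\<And>x u. (x, u) \<in> A \<Longrightarrow> 0 \<le> inner (x - z) (u - w)"
  shows "(z, w) \<in> A"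
proof -
  have "mono_op (insert (z, w) A)"
    using assms inner_diff_swap[of z _ w] unfolding max_mono_def mono_op_def by auto
  then show ?thesis
    using assms(1) unfolding max_mono_def by blast
qed

lemma max_mono_converse:
  assumes "max_mono (A :: ('a::real_inner) operator)"
  shows "max_mono (converse A)"
proof -
  have mono_converse: "mono_op (converse X) \<longleftrightarrow> mono_op X" for X :: "'a operator"
    unfolding mono_op_def converse_iff by (metis inner_commute)
  show ?thesis
    using assms unfolding max_mono_def mono_converse
    by (metis converse_converse converse_mono mono_converse)
qed

lemma dom_op_converse [simp]: "dom_op (converse A) = ran_op A"
  and ran_op_converse [simp]: "ran_op (converse A) = dom_op A"
  by (auto simp: dom_op_def ran_op_def)

theorem minty_surjective:
  fixes A :: "('a::{real_inner,complete_space}) operator"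
  assumes "max_mono A" and "0 < c"
  shows "\<exists>y. (y, x - c *\<^sub>R y) \<in> A"
proof -
  have "0 \<le> inner (c *\<^sub>R fst p - c *\<^sub>R fst q) ((snd p - x) - (snd q - x))" if "p \<in> A" "q \<in> A" for p q
  proof -
    have "0 \<le> inner (fst p - fst q) (snd p - snd q)"
      using assms(1) that unfolding max_mono_def mono_op_def by (cases p, cases q) auto
    then show ?thesis
      using assms(2) by (simp flip: scaleR_diff_right)
  qed
  then obtain u where u: "\<forall>p\<in>A. 0 \<le> inner (c *\<^sub>R fst p - u) ((snd p - x) + u)"
    using monotone_antidiagonal_point[of A "\<lambda>p. c *\<^sub>R fst p" "\<lambda>p. snd p - x"] by blast
  have cu: "c *\<^sub>R (u /\<^sub>R c) = u"
    using assms(2) by simp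
  have "(u /\<^sub>R c, x - u) \<in> A"
  proof (rule max_mono_memI[OF assms(1)])
    fix y v
    assume "(y, v) \<in> A"
    then have "0 \<le> inner (c *\<^sub>R y - u) ((v - x) + u)"
      using u by fastforce
    also have "inner (c *\<^sub>R y - u) ((v - x) + u) = c * inner (y - u /\<^sub>R c) (v - (x - u))"
      using assms(2) by (simp add: scaleR_diff_right algebra_simps flip: inner_scaleR_left)
    finally show "0 \<le> inner (y - u /\<^sub>R c) (v - (x - u))"
      using assms(2) by (simp add: zero_le_mult_iff)
  qed
  then have "(u /\<^sub>R c, x - c *\<^sub>R (u /\<^sub>R c)) \<in> A"
    by (simp only: cu)
  then show ?thesis ..
qed

section \<open>Domains and ranges of maximally monotone operators\<close>

lemma dom_op_nonempty: "max_mono A \<Longrightarrow> dom_op A \<noteq> {}"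
  and ran_op_nonempty: "max_mono A \<Longrightarrow> ran_op A \<noteq> {}"
  using max_mono_nonempty by (fastforce simp: dom_op_def ran_op_def)+

lemma closure_memI_quadratic_bound:
  fixes p :: "'a::real_normed_vector"
  assumes "0 \<le> K" "0 \<le> L"
    and approx: "\<And>t. 0 < t \<Longrightarrow> \<exists>s\<in>S. (norm (s - p))\<^sup>2 \<le> t * (K + L * norm (s - p))"
  shows "p \<in> closure S"
  unfolding closure_approachable
proof (intro allI impI)
  fix \<epsilon> :: real
  assume "0 < \<epsilon>"
  define Q where "Q = K / \<epsilon> + L"
  define t where "t = \<epsilon> / (Q + 1)"
  have "0 \<le> Q"
    using assms(1,2) \<open>0 < \<epsilon>\<close> by (simp add: Q_def)
  then have "0 < t" "t * Q < \<epsilon>"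
    using \<open>0 < \<epsilon>\<close> by (simp_all add: t_def field_simps)
  then obtain s where "s \<in> S" and s: "(norm (s - p))\<^sup>2 \<le> t * (K + L * norm (s - p))"
    using approx by blast
  have "norm (s - p) < \<epsilon>"
  proof (rule ccontr)
    let ?r = "norm (s - p)"
    assume "\<not> ?r < \<epsilon>"
    then have "0 < ?r" "t * K \<le> t * (K / \<epsilon> * ?r)"
      using assms(1) \<open>0 < \<epsilon>\<close> \<open>0 < t\<close> by (auto simp: field_simps intro!: mult_left_mono)
    then have "?r * ?r \<le> (t * Q) * ?r"
      using s by (simp add: Q_def power2_eq_square distrib_left distrib_right mult.assoc)
    then have "?r \<le> t * Q"
      using \<open>0 < ?r\<close> by simp
    then show False
      using \<open>\<not> ?r < \<epsilon>\<close> \<open>t * Q < \<epsilon>\<close> by simp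
  qed
  then show "\<exists>s\<in>S. dist s p < \<epsilon>"
    using \<open>s \<in> S\<close> by (auto simp: dist_norm)
qed

lemma rec_cone_closureI:
  fixes S :: "'a::real_normed_vector set"
  assumes "\<And>c. c \<in> S \<Longrightarrow> c + w \<in> closure S"
  shows "w \<in> rec_cone (closure S)"
proof -
  have "(\<lambda>c. c + w) ` closure S \<subseteq> closure S"
    using assms by (intro image_closure_subset continuous_intros) auto
  then show ?thesis
    by (auto simp: rec_cone_def)
qed

lemma rec_cone_closure_ran_op:
  fixes A :: "('a::{real_inner,complete_space}) operator"
  assumes "max_mono A" and "bdd_above (inner w ` dom_op A)"
  shows "w \<in> rec_cone (closure (ran_op A))"
proof (rule rec_cone_closureI)
  fix c
  assume "c \<in> ran_op A"
  then obtain a where a: "(a, c) \<in> A"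
    by (auto simp: ran_op_def)
  obtain M where M: "\<And>x. x \<in> dom_op A \<Longrightarrow> inner w x \<le> M"
    using assms(2) by (auto simp: bdd_above_def)
  show "c + w \<in> closure (ran_op A)"
  proof (rule closure_memI_quadratic_bound[of "\<bar>M - inner a w\<bar>" "norm a"])
    fix t :: real
    assume "0 < t"
    then obtain y where y: "(y, (c + w) - t *\<^sub>R y) \<in> A"
      using minty_surjective[OF assms(1)] by blast
    have "0 \<le> inner (y - a) (((c + w) - t *\<^sub>R y) - c)"
      using assms(1) y a unfolding max_mono_def mono_op_def by blast
    then have mono: "t * inner (y - a) y \<le> inner w y - inner a w"
      by (simp add: inner_diff_left inner_diff_right inner_commute algebra_simps)
    have "(norm (t *\<^sub>R y))\<^sup>2 = t * (t * inner (y - a) y) + t * inner a (t *\<^sub>R y)"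
      unfolding power2_norm_eq_inner by (simp add: inner_diff_left algebra_simps)
    also have "\<dots> \<le> t * (inner w y - inner a w + inner a (t *\<^sub>R y))"
      using mult_left_mono[OF mono, of t] \<open>0 < t\<close> by (simp add: distrib_left)
    also have "\<dots> \<le> t * (\<bar>M - inner a w\<bar> + norm a * norm (t *\<^sub>R y))"
    proof -
      have "inner w y \<le> M"
        using M y by (auto simp: dom_op_def)
      moreover have "inner a (t *\<^sub>R y) \<le> norm a * norm (t *\<^sub>R y)"
        by (rule norm_cauchy_schwarz)
      ultimately have "inner w y - inner a w + inner a (t *\<^sub>R y) \<le> \<bar>M - inner a w\<bar> + norm a * norm (t *\<^sub>R y)"
        by linarith
      then show ?thesis
        using \<open>0 < t\<close> by (simp add: mult_left_mono)
    qed
    finally have "(norm (t *\<^sub>R y))\<^sup>2 \<le> t * (\<bar>M - inner a w\<bar> + norm a * norm (t *\<^sub>R y))" .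
    moreover have "(c + w) - t *\<^sub>R y \<in> ran_op A"
      using y by (auto simp: ran_op_def)
    ultimately show "\<exists>s\<in>ran_op A. (norm (s - (c + w)))\<^sup>2 \<le> t * (\<bar>M - inner a w\<bar> + norm a * norm (s - (c + w)))"
      by (intro bexI[of _ "(c + w) - t *\<^sub>R y"]) simp_all
  qed auto
qed

lemma norm_sq_convex_combination_diff:
  fixes v :: "'i \<Rightarrow> 'a::real_inner"
  assumes "sum u S = 1"
  shows "(norm ((\<Sum>i\<in>S. u i *\<^sub>R v i) - y))\<^sup>2
    = (\<Sum>i\<in>S. u i * inner (v i - y) ((\<Sum>j\<in>S. u j *\<^sub>R v j) - y))"
proof -
  have "(\<Sum>i\<in>S. u i *\<^sub>R v i) - y = (\<Sum>i\<in>S. u i *\<^sub>R (v i - y))"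
    using assms by (simp add: scaleR_diff_right sum_subtractf flip: scaleR_sum_left)
  then show ?thesis
    by (simp add: power2_norm_eq_inner inner_sum_left flip: inner_diff_right)
qed

lemma inner_resolvent_diff_le:
  fixes A :: "('a::real_inner) operator"
  assumes "mono_op A" "(y, (x - y) /\<^sub>R t) \<in> A" "(v, g) \<in> A" "0 < t"
  shows "inner (v - y) (x - y) \<le> t * (\<bar>inner (v - x) g\<bar> + norm g * norm (y - x))"
proof -
  have "0 \<le> inner (y - v) ((x - y) /\<^sub>R t - g)"
    using assms(1-3) unfolding mono_op_def by blast
  also have "t * inner (y - v) ((x - y) /\<^sub>R t - g) = inner (y - v) (x - y) - t * inner (y - v) g"
    using assms(4) by (simp add: inner_diff_right right_diff_distrib flip: mult.assoc)
  finally have "inner (v - y) (x - y) \<le> t * inner (v - y) g"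
    using assms(4) by (simp add: zero_le_mult_iff inner_diff_left right_diff_distrib)
  also have "inner (v - y) g = inner (v - x) g + inner (x - y) g"
    by (simp add: inner_diff_left)
  also have "\<dots> \<le> \<bar>inner (v - x) g\<bar> + norm g * norm (y - x)"
    using norm_cauchy_schwarz[of "x - y" g] by (simp add: norm_minus_commute mult.commute)
  finally show ?thesis
    using assms(4) by (simp add: mult_left_mono)
qed

lemma convex_hull_dom_op_subset_closure:
  fixes A :: "('a::{real_inner,complete_space}) operator"
  assumes "max_mono A"
  shows "convex hull (dom_op A) \<subseteq> closure (dom_op A)"
proof
  fix x
  assume "x \<in> convex hull (dom_op A)"
  then obtain S u where S: "finite S" "S \<subseteq> dom_op A" and u: "\<And>v. v \<in> S \<Longrightarrow> 0 \<le> u v"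
    and "sum u S = 1" and x: "(\<Sum>v\<in>S. u v *\<^sub>R v) = x"
    unfolding convex_hull_explicit by blast
  obtain g where g: "\<And>v. v \<in> S \<Longrightarrow> (v, g v) \<in> A"
    using bchoice[of S "\<lambda>v b. (v, b) \<in> A"] S(2) unfolding dom_op_def by blast
  define K where "K = (\<Sum>v\<in>S. u v * \<bar>inner (v - x) (g v)\<bar>)"
  define L where "L = (\<Sum>v\<in>S. u v * norm (g v))"
  show "x \<in> closure (dom_op A)"
  proof (rule closure_memI_quadratic_bound[of K L])
    fix t :: real
    assume "0 < t"
    then obtain y where y: "(y, x /\<^sub>R t - (1 / t) *\<^sub>R y) \<in> A"
      using minty_surjective[OF assms, of "1 / t"] by auto
    then have y': "(y, (x - y) /\<^sub>R t) \<in> A"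
      by (simp add: scaleR_diff_right inverse_eq_divide)
    have "(norm (y - x))\<^sup>2 = (\<Sum>v\<in>S. u v * inner (v - y) (x - y))"
      using norm_sq_convex_combination_diff[OF \<open>sum u S = 1\<close>, of id y] x
      by (simp add: norm_minus_commute)
    also have "\<dots> \<le> (\<Sum>v\<in>S. u v * (t * (\<bar>inner (v - x) (g v)\<bar> + norm (g v) * norm (y - x))))"
      using assms y' g u \<open>0 < t\<close> unfolding max_mono_def
      by (intro sum_mono mult_left_mono inner_resolvent_diff_le) auto
    also have "\<dots> = t * (K + L * norm (y - x))"
      by (simp add: K_def L_def sum_distrib_left sum_distrib_right sum.distrib algebra_simps)
    finally have "(norm (y - x))\<^sup>2 \<le> t * (K + L * norm (y - x))" .
    moreover have "y \<in> dom_op A"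
      using y by (auto simp: dom_op_def)
    ultimately show "\<exists>s\<in>dom_op A. (norm (s - x))\<^sup>2 \<le> t * (K + L * norm (s - x))"
      by blast
  qed (use u in \<open>auto simp: K_def L_def intro!: sum_nonneg\<close>)
qed

lemma convex_closure_dom_op:
  fixes A :: "('a::{real_inner,complete_space}) operator"
  assumes "max_mono A"
  shows "convex (closure (dom_op A))"
proof -
  have "closure (dom_op A) = closure (convex hull (dom_op A))"
    using convex_hull_dom_op_subset_closure[OF assms]
    by (intro subset_antisym closure_mono hull_subset closure_minimal) simp_all
  then show ?thesis
    by (simp add: convex_closure)
qed

lemma convex_closure_ran_op:
  fixes A :: "('a::{real_inner,complete_space}) operator"
  assumes "max_mono A"
  shows "convex (closure (ran_op A))"
  using convex_closure_dom_op[OF max_mono_converse[OF assms]] by simp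

section \<open>Minkowski sums and recession cones\<close>

lemma set_minus_eq_UN: "set_minus S T = (\<Union>x\<in>S. \<Union>y\<in>T. {x - y})"
  by (auto simp: set_minus_def)

lemma set_plus_eq_UN: "set_plus S T = (\<Union>x\<in>S. \<Union>y\<in>T. {x + y})"
  by (auto simp: set_plus_def)

lemma set_minus_mono: "S \<subseteq> S' \<Longrightarrow> T \<subseteq> T' \<Longrightarrow> set_minus S T \<subseteq> set_minus S' T'"
  by (auto simp: set_minus_def)

lemma set_plus_mono: "S \<subseteq> S' \<Longrightarrow> T \<subseteq> T' \<Longrightarrow> set_plus S T \<subseteq> set_plus S' T'"
  by (auto simp: set_plus_def)

lemma closure_set_minus_closure:
  fixes S T :: "'a::real_normed_vector set"
  shows "closure (set_minus (closure S) (closure T)) = closure (set_minus S T)"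
proof (rule subset_antisym)
  have "(\<lambda>(s, t). s - t) ` closure (S \<times> T) \<subseteq> closure (set_minus S T)"
    unfolding case_prod_unfold
    by (intro image_closure_subset continuous_intros closed_closure)
      (use closure_subset in \<open>fastforce simp: set_minus_def\<close>)
  then have "set_minus (closure S) (closure T) \<subseteq> closure (set_minus S T)"
    by (auto simp: closure_Times set_minus_def)
  then show "closure (set_minus (closure S) (closure T)) \<subseteq> closure (set_minus S T)"
    by (simp add: closure_minimal)
qed (intro closure_mono set_minus_mono closure_subset)

lemma closure_set_plus_closure:
  fixes S T :: "'a::real_normed_vector set"
  shows "closure (set_plus (closure S) (closure T)) = closure (set_plus S T)"
proof (rule subset_antisym)
  have "(\<lambda>(s, t). s + t) ` closure (S \<times> T) \<subseteq> closure (set_plus S T)"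
    unfolding case_prod_unfold
    by (intro image_closure_subset continuous_intros closed_closure)
      (use closure_subset in \<open>fastforce simp: set_plus_def\<close>)
  then have "set_plus (closure S) (closure T) \<subseteq> closure (set_plus S T)"
    by (auto simp: closure_Times set_plus_def)
  then show "closure (set_plus (closure S) (closure T)) \<subseteq> closure (set_plus S T)"
    by (simp add: closure_minimal)
qed (intro closure_mono set_plus_mono closure_subset)

lemma convex_closure_set_minus:
  fixes S T :: "'a::real_normed_vector set"
  assumes "convex (closure S)" "convex (closure T)"
  shows "convex (closure (set_minus S T))"
  using convex_closure[OF convex_differences[OF assms]]
  by (simp flip: set_minus_eq_UN add: closure_set_minus_closure)

lemma convex_closure_set_plus:
  fixes S T :: "'a::real_normed_vector set"
  assumes "convex (closure S)" "convex (closure T)"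
  shows "convex (closure (set_plus S T))"
  using convex_closure[OF convex_sums[OF assms]]
  by (simp flip: set_plus_eq_UN add: closure_set_plus_closure)

lemma rec_cone_closure_set_minus:
  fixes S T :: "'a::real_normed_vector set"
  assumes "d \<in> rec_cone (closure T)"
  shows "- d \<in> rec_cone (closure (set_minus S T))"
proof (rule rec_cone_closureI)
  fix c
  assume "c \<in> set_minus S T"
  then obtain s t where "s \<in> S" "t \<in> T" "c = s - t"
    by (auto simp: set_minus_def)
  moreover have "t + d \<in> closure T"
    using assms closure_subset \<open>t \<in> T\<close> by (auto simp: rec_cone_def)
  ultimately have "c + - d \<in> set_minus (closure S) (closure T)"
    unfolding set_minus_def using closure_subset
    by (intro CollectI exI[of _ s] exI[of _ "t + d"]) (auto simp: algebra_simps)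
  then show "c + - d \<in> closure (set_minus S T)"
    using closure_subset closure_set_minus_closure by blast
qed

lemma rec_cone_closure_set_plus:
  fixes S T :: "'a::real_normed_vector set"
  assumes "d \<in> rec_cone (closure T)"
  shows "d \<in> rec_cone (closure (set_plus S T))"
proof (rule rec_cone_closureI)
  fix c
  assume "c \<in> set_plus S T"
  then obtain s t where "s \<in> S" "t \<in> T" "c = s + t"
    by (auto simp: set_plus_def)
  moreover have "t + d \<in> closure T"
    using assms closure_subset \<open>t \<in> T\<close> by (auto simp: rec_cone_def)
  ultimately have "c + d \<in> set_plus (closure S) (closure T)"
    unfolding set_plus_def using closure_subset
    by (intro CollectI exI[of _ s] exI[of _ "t + d"]) (auto simp: algebra_simps)
  then show "c + d \<in> closure (set_plus S T)"
    using closure_subset closure_set_plus_closure by blast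
qed

lemma rec_cone_iterate:
  assumes "d \<in> rec_cone C" "c \<in> C"
  shows "c + of_nat n *\<^sub>R d \<in> C"
  using assms by (induction n) (auto simp: rec_cone_def algebra_simps)

lemma polar_rec_cone_if_bdd_above:
  fixes C :: "'a::real_inner set"
  assumes "bdd_above (inner v ` C)" "C \<noteq> {}"
  shows "v \<in> polar_cone (rec_cone C)"
  unfolding polar_cone_def
proof (intro CollectI ballI)
  fix d
  assume "d \<in> rec_cone C"
  obtain c where "c \<in> C"
    using assms(2) by blast
  obtain M where M: "\<And>x. x \<in> C \<Longrightarrow> inner v x \<le> M"
    using assms(1) by (auto simp: bdd_above_def)
  have "\<forall>n. inner v c + of_nat n * inner v d \<le> M"
    using M[OF rec_cone_iterate[OF \<open>d \<in> rec_cone C\<close> \<open>c \<in> C\<close>]] by (simp add: inner_add_right)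
  then show "inner v d \<le> 0"
  proof (rule contrapos_pp)
    assume "\<not> inner v d \<le> 0"
    obtain n :: nat where "(M - inner v c) / inner v d < n"
      using reals_Archimedean2 by blast
    then show "\<not> (\<forall>n. inner v c + of_nat n * inner v d \<le> M)"
      using \<open>\<not> inner v d \<le> 0\<close> by (auto simp: pos_divide_less_eq not_le intro!: exI[of _ n])
  qed
qed

lemma uminus_image_iff: "u \<in> uminus ` S \<longleftrightarrow> - u \<in> (S :: 'a::group_add set)"
  by (force intro: image_eqI[of _ uminus "- u"])

lemma polar_cone_uminus: "polar_cone (uminus ` S) = uminus ` polar_cone (S :: 'a::real_inner set)"
  by (auto simp: polar_cone_def uminus_image_iff)

section \<open>The minimal displacement vectors\<close>

locale max_mono_pair =
  fixes A B :: "('a::{real_inner,complete_space}) operator"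
  assumes max_mono_A: "max_mono A" and max_mono_B: "max_mono B"
begin

abbreviation "dom_diff \<equiv> set_minus (dom_op A) (dom_op B)"
abbreviation "ran_sum \<equiv> set_plus (ran_op A) (ran_op B)"
abbreviation "v_dom \<equiv> proj (closure dom_diff) 0"
abbreviation "v_ran \<equiv> proj (closure ran_sum) 0"

lemma closure_dom_diff: "closed (closure dom_diff)" "convex (closure dom_diff)" "closure dom_diff \<noteq> {}"
proof -
  show "closed (closure dom_diff)"
    by simp
  show "convex (closure dom_diff)"
    by (intro convex_closure_set_minus convex_closure_dom_op max_mono_A max_mono_B)
  show "closure dom_diff \<noteq> {}"
    using dom_op_nonempty[OF max_mono_A] dom_op_nonempty[OF max_mono_B] by (auto simp: set_minus_def)
qed

lemma closure_ran_sum: "closed (closure ran_sum)" "convex (closure ran_sum)" "closure ran_sum \<noteq> {}"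
proof -
  show "closed (closure ran_sum)"
    by simp
  show "convex (closure ran_sum)"
    by (intro convex_closure_set_plus convex_closure_ran_op max_mono_A max_mono_B)
  show "closure ran_sum \<noteq> {}"
    using ran_op_nonempty[OF max_mono_A] ran_op_nonempty[OF max_mono_B] by (auto simp: set_plus_def)
qed

lemma v_dom_in: "v_dom \<in> closure dom_diff"
  using proj_in[OF closure_dom_diff] .

lemma v_ran_in: "v_ran \<in> closure ran_sum"
  using proj_in[OF closure_ran_sum] .

lemma norm_v_dom_sq_le:
  assumes "x \<in> closure (dom_op A)" "y \<in> closure (dom_op B)"
  shows "(norm v_dom)\<^sup>2 \<le> inner v_dom (x - y)"
proof (rule norm_proj0_sq_le_inner[OF closure_dom_diff(1,2)])
  have "x - y \<in> set_minus (closure (dom_op A)) (closure (dom_op B))"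
    using assms by (auto simp: set_minus_def)
  then show "x - y \<in> closure dom_diff"
    using closure_set_minus_closure closure_subset by blast
qed

lemma norm_v_ran_sq_le:
  assumes "x \<in> closure (ran_op A)" "y \<in> closure (ran_op B)"
  shows "(norm v_ran)\<^sup>2 \<le> inner v_ran (x + y)"
proof (rule norm_proj0_sq_le_inner[OF closure_ran_sum(1,2)])
  have "x + y \<in> set_plus (closure (ran_op A)) (closure (ran_op B))"
    using assms by (auto simp: set_plus_def)
  then show "x + y \<in> closure ran_sum"
    using closure_set_plus_closure closure_subset by blast
qed

lemma bdd_above_v_dom:
  "bdd_above (inner (- v_dom) ` closure (dom_op A))"
  "bdd_above (inner v_dom ` closure (dom_op B))"
proof -
  obtain a b where "a \<in> dom_op A" "b \<in> dom_op B"
    using dom_op_nonempty[OF max_mono_A] dom_op_nonempty[OF max_mono_B] by blast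
  then have a: "a \<in> closure (dom_op A)" and b: "b \<in> closure (dom_op B)"
    by (simp_all add: closure_subset[THEN subsetD])
  show "bdd_above (inner (- v_dom) ` closure (dom_op A))"
  proof (rule bdd_aboveI2)
    show "inner (- v_dom) x \<le> - (norm v_dom)\<^sup>2 - inner v_dom b" if "x \<in> closure (dom_op A)" for x
      using norm_v_dom_sq_le[OF that b] by (simp add: inner_diff_right)
  qed
  show "bdd_above (inner v_dom ` closure (dom_op B))"
  proof (rule bdd_aboveI2)
    show "inner v_dom y \<le> inner v_dom a - (norm v_dom)\<^sup>2" if "y \<in> closure (dom_op B)" for y
      using norm_v_dom_sq_le[OF a that] by (simp add: inner_diff_right)
  qed
qed

lemma bdd_above_v_ran:
  "bdd_above (inner (- v_ran) ` closure (ran_op A))"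
  "bdd_above (inner (- v_ran) ` closure (ran_op B))"
proof -
  obtain a' b' where "a' \<in> ran_op A" "b' \<in> ran_op B"
    using ran_op_nonempty[OF max_mono_A] ran_op_nonempty[OF max_mono_B] by blast
  then have a': "a' \<in> closure (ran_op A)" and b': "b' \<in> closure (ran_op B)"
    by (simp_all add: closure_subset[THEN subsetD])
  show "bdd_above (inner (- v_ran) ` closure (ran_op A))"
  proof (rule bdd_aboveI2)
    show "inner (- v_ran) x \<le> inner v_ran b' - (norm v_ran)\<^sup>2" if "x \<in> closure (ran_op A)" for x
      using norm_v_ran_sq_le[OF that b'] by (simp add: inner_add_right)
  qed
  show "bdd_above (inner (- v_ran) ` closure (ran_op B))"
  proof (rule bdd_aboveI2)
    show "inner (- v_ran) y \<le> inner v_ran a' - (norm v_ran)\<^sup>2" if "y \<in> closure (ran_op B)" for y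
      using norm_v_ran_sq_le[OF a' that] by (simp add: inner_add_right)
  qed
qed

lemma closure_dom_op_nonempty: "closure (dom_op A) \<noteq> {}" "closure (dom_op B) \<noteq> {}"
  and closure_ran_op_nonempty: "closure (ran_op A) \<noteq> {}" "closure (ran_op B) \<noteq> {}"
  using dom_op_nonempty ran_op_nonempty max_mono_A max_mono_B by auto

lemma v_dom_in_polar_rec_dom:
  "v_dom \<in> polar_cone (uminus ` rec_cone (closure (dom_op A))) \<inter> polar_cone (rec_cone (closure (dom_op B)))"
  using polar_rec_cone_if_bdd_above[OF bdd_above_v_dom(1) closure_dom_op_nonempty(1)]
    polar_rec_cone_if_bdd_above[OF bdd_above_v_dom(2) closure_dom_op_nonempty(2)]
  by (simp add: polar_cone_uminus uminus_image_iff)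

lemma v_dom_in_rec_ran:
  "v_dom \<in> uminus ` rec_cone (closure (ran_op A)) \<inter> rec_cone (closure (ran_op B))"
proof -
  have "- v_dom \<in> rec_cone (closure (ran_op A))"
    by (rule rec_cone_closure_ran_op[OF max_mono_A
          bdd_above_mono[OF bdd_above_v_dom(1) image_mono[OF closure_subset]]])
  moreover have "v_dom \<in> rec_cone (closure (ran_op B))"
    by (rule rec_cone_closure_ran_op[OF max_mono_B
          bdd_above_mono[OF bdd_above_v_dom(2) image_mono[OF closure_subset]]])
  ultimately show ?thesis
    by (simp add: uminus_image_iff)
qed

lemma v_ran_in_polar_rec_ran:
  "v_ran \<in> polar_cone (uminus ` rec_cone (closure (ran_op A))) \<inter> polar_cone (uminus ` rec_cone (closure (ran_op B)))"
  using polar_rec_cone_if_bdd_above[OF bdd_above_v_ran(1) closure_ran_op_nonempty(1)]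
    polar_rec_cone_if_bdd_above[OF bdd_above_v_ran(2) closure_ran_op_nonempty(2)]
  by (simp add: polar_cone_uminus uminus_image_iff)

lemma v_ran_in_rec_dom:
  "v_ran \<in> uminus ` rec_cone (closure (dom_op A)) \<inter> uminus ` rec_cone (closure (dom_op B))"
proof -
  have "- v_ran \<in> rec_cone (closure (dom_op A))"
    using rec_cone_closure_ran_op[OF max_mono_converse[OF max_mono_A], of "- v_ran"]
      bdd_above_mono[OF bdd_above_v_ran(1) image_mono[OF closure_subset]]
    by (simp only: dom_op_converse ran_op_converse)
  moreover have "- v_ran \<in> rec_cone (closure (dom_op B))"
    using rec_cone_closure_ran_op[OF max_mono_converse[OF max_mono_B], of "- v_ran"]
      bdd_above_mono[OF bdd_above_v_ran(2) image_mono[OF closure_subset]]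
    by (simp only: dom_op_converse ran_op_converse)
  ultimately show ?thesis
    by (simp add: uminus_image_iff)
qed

lemma inner_v_dom_v_ran: "inner v_dom v_ran = 0"
proof -
  have "v_ran \<in> uminus ` rec_cone (closure (dom_op A))" "- v_ran \<in> rec_cone (closure (dom_op B))"
    using v_ran_in_rec_dom by (simp_all add: uminus_image_iff)
  then have "inner v_dom v_ran \<le> 0" "inner v_dom (- v_ran) \<le> 0"
    using v_dom_in_polar_rec_dom unfolding polar_cone_def by blast+
  then show ?thesis
    by simp
qed

lemma v_dom_add_v_ran_in: "v_dom + v_ran \<in> closure dom_diff \<inter> closure ran_sum"
proof
  have "- (- v_ran) \<in> rec_cone (closure dom_diff)"
    by (rule rec_cone_closure_set_minus) (use v_ran_in_rec_dom in \<open>simp add: uminus_image_iff\<close>)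
  then show "v_dom + v_ran \<in> closure dom_diff"
    using v_dom_in by (simp add: rec_cone_def)
  have "v_dom \<in> rec_cone (closure ran_sum)"
    by (rule rec_cone_closure_set_plus) (use v_dom_in_rec_ran in blast)
  then have "v_ran + v_dom \<in> closure ran_sum"
    using v_ran_in by (simp add: rec_cone_def)
  then show "v_dom + v_ran \<in> closure ran_sum"
    by (simp only: add.commute)
qed

lemma proj_Int_closure: "proj (closure dom_diff \<inter> closure ran_sum) 0 = v_dom + v_ran"
proof (rule proj_eqI)
  show "closed (closure dom_diff \<inter> closure ran_sum)" "convex (closure dom_diff \<inter> closure ran_sum)"
    using closure_dom_diff closure_ran_sum by (auto intro: convex_Int)
  show "v_dom + v_ran \<in> closure dom_diff \<inter> closure ran_sum"
    by (rule v_dom_add_v_ran_in)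
  fix y
  assume y: "y \<in> closure dom_diff \<inter> closure ran_sum"
  have "(norm v_dom)\<^sup>2 \<le> inner v_dom y"
    by (rule norm_proj0_sq_le_inner[OF closure_dom_diff(1,2)]) (use y in blast)
  moreover have "(norm v_ran)\<^sup>2 \<le> inner v_ran y"
    by (rule norm_proj0_sq_le_inner[OF closure_ran_sum(1,2)]) (use y in blast)
  ultimately show "inner (0 - (v_dom + v_ran)) (y - (v_dom + v_ran)) \<le> 0"
    using inner_v_dom_v_ran
    by (simp add: power2_norm_eq_inner inner_add_left inner_add_right inner_diff_right inner_commute)
qed

end

theorem proposition3p3:
  fixes A B :: "('a::{real_inner, complete_space}) operator"
    and D R :: "'a set" and vD vR :: 'a
  assumes "max_mono A" and "max_mono B"
      and "D = set_minus (dom_op A) (dom_op B)"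
      and "R = set_plus (ran_op A) (ran_op B)"
      and "vD = proj (closure D) 0"
      and "vR = proj (closure R) 0"
  shows
    "(vD \<in> polar_cone (uminus ` rec_cone (closure (dom_op A))) \<inter> polar_cone (rec_cone (closure (dom_op B)))
      \<and> polar_cone (uminus ` rec_cone (closure (dom_op A))) \<inter> polar_cone (rec_cone (closure (dom_op B)))
         = uminus ` polar_cone (rec_cone (closure (dom_op A))) \<inter> polar_cone (rec_cone (closure (dom_op B))))
   \<and> (vD \<in> uminus ` rec_cone (closure (ran_op A)) \<inter> rec_cone (closure (ran_op B)))
   \<and> (vR \<in> polar_cone (uminus ` rec_cone (closure (ran_op A))) \<inter> polar_cone (uminus ` rec_cone (closure (ran_op B)))
      \<and> polar_cone (uminus ` rec_cone (closure (ran_op A))) \<inter> polar_cone (uminus ` rec_cone (closure (ran_op B)))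
         = uminus ` (polar_cone (rec_cone (closure (ran_op A))) \<inter> polar_cone (rec_cone (closure (ran_op B)))))
   \<and> (vR \<in> uminus ` rec_cone (closure (dom_op A)) \<inter> uminus ` rec_cone (closure (dom_op B))
      \<and> uminus ` rec_cone (closure (dom_op A)) \<inter> uminus ` rec_cone (closure (dom_op B))
         = uminus ` (rec_cone (closure (dom_op A)) \<inter> rec_cone (closure (dom_op B))))
   \<and> inner vD vR = 0
   \<and> vD + vR \<in> closure D \<inter> closure R
   \<and> (\<forall>T v. T = (\<lambda>x. x - resolvent A x + resolvent B (reflected_resolvent A x)) \<longrightarrow>
           v = proj (closure (range (\<lambda>x. x - T x))) 0 \<longrightarrow>
           closure (range (\<lambda>x. x - T x)) = closure (D \<inter> R) \<longrightarrow>
           closure (D \<inter> R) = closure D \<inter> closure R \<longrightarrow>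
           v = vD + vR \<and> (norm v)\<^sup>2 = (norm vD)\<^sup>2 + (norm vR)\<^sup>2
             \<and> (norm vD)\<^sup>2 + (norm vR)\<^sup>2 = (norm (vR, vD))\<^sup>2)"
proof -
  interpret max_mono_pair A B
    using assms(1,2) by unfold_locales
  have norm_sum: "(norm (vD + vR))\<^sup>2 = (norm vD)\<^sup>2 + (norm vR)\<^sup>2"
    using inner_v_dom_v_ran assms(3-6)
    by (simp add: power2_norm_eq_inner inner_add_left inner_add_right inner_commute)
  \<comment> \<open>the last two hypotheses make \<open>v\<close> the projection onto \<open>closure D \<inter> closure R\<close>; \<open>T\<close> plays no further role\<close>
  show ?thesis
    using v_dom_in_polar_rec_dom v_dom_in_rec_ran v_ran_in_polar_rec_ran v_ran_in_rec_dom
      inner_v_dom_v_ran v_dom_add_v_ran_in proj_Int_closure norm_sum assms(3-6)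
    by (simp add: polar_cone_uminus image_Int norm_Pair)
qed

end
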